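(* Let $\mathcal{M}=(\Sigma,\Gamma,\mathcal{H},U,M)$ be a QMM, $\rho$ a Hermitian operator on $\mathcal{H}$, and $m,k\in\mathbb{N}$. If $\operatorname{span}\mathfrak{D}_l(\rho,m)=\operatorname{span}\mathfrak{D}_l(\rho,m+1)$ for every $0\le l\le k$, then $\operatorname{span}\mathfrak{D}_l(\rho,m)=\operatorname{span}\mathfrak{D}_l(\rho,m+\delta)$ for every $0\le l\le k$ and every $\delta\in\mathbb{N}$.
   Context: A quantum Mealy machine (QMM) is a tuple $\mathcal{M}=(\Sigma,\Gamma,\mathcal{H},U,M)$ where $\Sigma,\Gamma$ are finite alphabets, $\mathcal{H}$ a finite-dimensional complex Hilbert space, $U=\{U_\sigma\}_{\sigma\in\Sigma}$ unitary operators on $\mathcal{H}$, $M=\{M_\gamma\}_{\gamma\in\Gamma}$ linear operators with $\sum_\gamma M_\gamma^\dagger M_\gamma=I$. For a word $a$, $|a|$ is its length, $a[l:r]=a[l]\cdots a[r]$ (empty if $l>r$), $U_a=U_{a[|a|]}\cdots U_{a[1]}$, $U_\epsilon=I$. A scheduler for $a\in\Sigma^*$ is a finite non-decreasing integer sequence $\mathcal{S}=(s_1\le\dots\le s_{|\mathcal{S}|})$ in $\{0,\dots,|a|\}$ (possibly empty); $\mathfrak{S}_a$ is the set of schedulers for $a$. With $s_0=0$, $s_{|\mathcal{S}|+1}=|a|$, $a_i=a[s_{i-1}+1:s_i]$. For $b\in\Gamma^{|\mathcal{S}|}$, $V_{b|a,\mathcal{S}}=U_{a_{|\mathcal{S}|+1}}M_{b_{|\mathcal{S}|}}U_{a_{|\mathcal{S}|}}\cdots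 M_{b_1}U_{a_1}$ and $\rho^{\mathcal{M}}_{b|a,\mathcal{S}}=V_{b|a,\mathcal{S}}\rho V_{b|a,\mathcal{S}}^\dagger$. For a Hermitian $\rho$ and $k,m\in\mathbb{N}$, $\mathfrak{D}_k(\rho,m)=\{\rho^{\mathcal{M}}_{b|a,\mathcal{S}}: a\in\Sigma^*,\mathcal{S}\in\mathfrak{S}_a,b\in\Gamma^{|\mathcal{S}|},|a|+|\mathcal{S}|\le m,|\mathcal{S}|\le k\}$; spans are complex linear spans in the space of operators on $\mathcal{H}$. *)

theory Defs
  imports "Jordan_Normal_Form.Schur_Decomposition" "Jordan_Normal_Form.VS_Connect"
begin

text \<open>Operators on the d-dimensional Hilbert space C^d are d x d complex matrices.
  Input letters have type 's, output letters type 'g (both finite types).\<close>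

text \<open>U_a = U_{a[|a|]} ... U_{a[1]}, U_epsilon = I.\<close>
fun U_word :: "nat \<Rightarrow> ('s \<Rightarrow> complex mat) \<Rightarrow> 's list \<Rightarrow> complex mat" where
  "U_word d U [] = 1\<^sub>m d"
| "U_word d U (\<sigma> # a) = U_word d U a * U \<sigma>"

text \<open>V_aux d U M a p S b computes U_{a_{j+1}} M_{b_j} ... M_{b_1'} U_{a[p+1:s_1']}
  for the remaining scheduler entries S and outputs b, where p is the previous
  scheduler entry; the full operator is V_aux with p = 0.\<close>
fun V_aux :: "nat \<Rightarrow> ('s \<Rightarrow> complex mat) \<Rightarrow> ('g \<Rightarrow> complex mat) \<Rightarrow> 's list
    \<Rightarrow> nat \<Rightarrow> nat list \<Rightarrow> 'g list \<Rightarrow> complex mat" where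
  "V_aux d U M a p [] [] = U_word d U (drop p a)"
| "V_aux d U M a p (s # S) (g # b) =
     V_aux d U M a s S b * M g * U_word d U (take (s - p) (drop p a))"
| "V_aux d U M a p _ _ = undefined"

definition V_op :: "nat \<Rightarrow> ('s \<Rightarrow> complex mat) \<Rightarrow> ('g \<Rightarrow> complex mat) \<Rightarrow> 's list
    \<Rightarrow> nat list \<Rightarrow> 'g list \<Rightarrow> complex mat" where
  "V_op d U M a S b = V_aux d U M a 0 S b"

definition schedulers :: "'s list \<Rightarrow> nat list set" where
  "schedulers a = {S. sorted S \<and> set S \<subseteq> {0..length a}}"

definition D_set :: "nat \<Rightarrow> ('s \<Rightarrow> complex mat) \<Rightarrow> ('g \<Rightarrow> complex mat)
    \<Rightarrow> nat \<Rightarrow> complex mat \<Rightarrow> nat \<Rightarrow> complex mat set" where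
  "D_set d U M k \<rho> m =
     {V_op d U M a S b * \<rho> * mat_adjoint (V_op d U M a S b) | a S b.
        S \<in> schedulers a \<and> length b = length S \<and>
        length a + length S \<le> m \<and> length S \<le> k}"

definition op_span :: "nat \<Rightarrow> complex mat set \<Rightarrow> complex mat set" where
  "op_span d X = LinearCombinations.module.span class_ring (module_mat TYPE(complex) d d) X"

definition is_QMM :: "nat \<Rightarrow> ('s::finite \<Rightarrow> complex mat) \<Rightarrow> ('g::finite \<Rightarrow> complex mat) \<Rightarrow> bool" where
  "is_QMM d U M \<longleftrightarrow>
     (\<forall>\<sigma>. U \<sigma> \<in> carrier_mat d d \<and> mat_adjoint (U \<sigma>) * U \<sigma> = 1\<^sub>m d \<and> U \<sigma> * mat_adjoint (U \<sigma>) = 1\<^sub>m d) \<and>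
     (\<forall>\<gamma>. M \<gamma> \<in> carrier_mat d d) \<and>
     finsum (module_mat TYPE(complex) d d) (\<lambda>\<gamma>. mat_adjoint (M \<gamma>) * M \<gamma>) UNIV = 1\<^sub>m d"

end

theory Submission
  imports Defs
begin

text \<open>Splitting off the last event of a run -- either a letter \<open>\<sigma>\<close> or a measurement
  with outcome \<open>\<gamma>\<close> -- shows that \<open>\<D>\<^sub>l(\<rho>, n+1)\<close> consists of \<open>\<D>\<^sub>l(\<rho>, n)\<close>,
  its conjugates \<open>U\<^sub>\<sigma> x U\<^sub>\<sigma>\<^sup>\<dagger>\<close>, and, when \<open>l > 0\<close>, the conjugates
  \<open>M\<^sub>\<gamma> y M\<^sub>\<gamma>\<^sup>\<dagger>\<close> of \<open>\<D>\<^sub>l\<^sub>-\<^sub>1(\<rho>, n)\<close>. Conjugation is linear, so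
  \<open>span \<D>\<^sub>l(\<rho>, n+1)\<close> depends only on \<open>span \<D>\<^sub>l(\<rho>, n)\<close> and
  \<open>span \<D>\<^sub>l\<^sub>-\<^sub>1(\<rho>, n)\<close>. Once these spans agree at \<open>m\<close> and \<open>m+1\<close> for all
  \<open>l \<le> k\<close>, induction on \<open>\<delta>\<close> propagates the agreement to \<open>m + \<delta>\<close>.\<close>

lemma dim_mat_adjoint [simp]:
  "dim_row (mat_adjoint A) = dim_col A" "dim_col (mat_adjoint A) = dim_row A"
  unfolding mat_adjoint_def by auto

lemma mat_adjoint_index:
  "i < dim_col A \<Longrightarrow> j < dim_row A \<Longrightarrow> mat_adjoint A $$ (i, j) = conjugate (A $$ (j, i))"
  unfolding mat_adjoint_def by (simp add: mat_of_rows_index)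

lemma mat_adjoint_carrier_mat: "A \<in> carrier_mat n m \<Longrightarrow> mat_adjoint A \<in> carrier_mat m n"
  unfolding mat_adjoint_def by auto

lemma mat_adjoint_mult:
  fixes A B :: "'a :: conjugatable_field mat"
  assumes "A \<in> carrier_mat n k" and "B \<in> carrier_mat k m"
  shows "mat_adjoint (A * B) = mat_adjoint B * mat_adjoint A"
proof (rule eq_matI)
  fix i j
  assume "i < dim_row (mat_adjoint B * mat_adjoint A)" "j < dim_col (mat_adjoint B * mat_adjoint A)"
  with assms have i: "i < m" and j: "j < n" by auto
  have "mat_adjoint (A * B) $$ (i, j) = conjugate (\<Sum>l<k. A $$ (j, l) * B $$ (l, i))"
    using assms i j by (simp add: mat_adjoint_index scalar_prod_def atLeast0LessThan)
  also have "\<dots> = (\<Sum>l<k. conjugate (B $$ (l, i)) * conjugate (A $$ (j, l)))"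
    by (simp add: sum_conjugate conjugate_dist_mul mult.commute)
  also have "\<dots> = (\<Sum>l<k. mat_adjoint B $$ (i, l) * mat_adjoint A $$ (l, j))"
    using assms i j by (simp add: mat_adjoint_index)
  also have "\<dots> = (mat_adjoint B * mat_adjoint A) $$ (i, j)"
    using assms i j by (simp add: scalar_prod_def atLeast0LessThan)
  finally show "mat_adjoint (A * B) $$ (i, j) = (mat_adjoint B * mat_adjoint A) $$ (i, j)" .
qed (use assms in auto)

definition sandwich :: "'a :: conjugatable_field mat \<Rightarrow> 'a mat \<Rightarrow> 'a mat" where
  "sandwich A X = A * X * mat_adjoint A"

lemma sandwich_carrier_mat:
  "A \<in> carrier_mat n n \<Longrightarrow> X \<in> carrier_mat n n \<Longrightarrow> sandwich A X \<in> carrier_mat n n"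
  unfolding sandwich_def by (intro mult_carrier_mat mat_adjoint_carrier_mat)

lemma sandwich_mult:
  assumes A: "A \<in> carrier_mat n n" and B: "B \<in> carrier_mat n n" and X: "X \<in> carrier_mat n n"
  shows "sandwich (A * B) X = sandwich A (sandwich B X)"
proof -
  have "A * B * X * (mat_adjoint B * mat_adjoint A) = A * (B * X * mat_adjoint B) * mat_adjoint A"
    using A B X mat_adjoint_carrier_mat[OF A] mat_adjoint_carrier_mat[OF B]
    by (simp add: assoc_mult_mat[of _ n n _ n _ n])
  then show ?thesis
    unfolding sandwich_def mat_adjoint_mult[OF A B] .
qed

lemma (in mod_hom) image_span_subset:
  assumes X: "X \<subseteq> carrier M"
  shows "f ` M.span X \<subseteq> N.span (f ` X)"
proof -
  have fX: "f ` X \<subseteq> carrier N" using X by auto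
  interpret S: submodule R "N.span (f ` X)" N by (rule N.span_is_submodule[OF fX])
  define P where "P = {v \<in> carrier M. f v \<in> N.span (f ` X)}"
  have "submodule R P M"
    by (rule submodule.intro) (auto simp: P_def M.module_axioms)
  moreover have "X \<subseteq> P" using X N.in_own_span[OF fX] by (auto simp: P_def)
  ultimately have "M.span X \<subseteq> P" by (rule M.span_is_subset[rotated])
  then show ?thesis by (auto simp: P_def)
qed

lemma module_module_mat: "Module.module class_ring (module_mat TYPE('a :: field) nr nc)"
  by (rule vectorspace.axioms(1)[OF matrix_vs])

lemma mod_hom_mult_both_mat:
  fixes A B :: "'a :: field mat"
  assumes A: "A \<in> carrier_mat p n" and B: "B \<in> carrier_mat n q"
  shows "mod_hom class_ring (module_mat TYPE('a) n n) (module_mat TYPE('a) p q) (\<lambda>X. A * X * B)"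
proof (rule mod_hom.intro[OF module_module_mat module_module_mat], unfold_locales,
    unfold LinearCombinations.module_hom_def, intro CollectI conjI allI impI)
  show "(\<lambda>X. A * X * B) \<in> carrier (module_mat TYPE('a) n n) \<rightarrow> carrier (module_mat TYPE('a) p q)"
    using A B by (auto simp: module_mat_simps)
next
  fix X Y assume "X \<in> carrier (module_mat TYPE('a) n n) \<and> Y \<in> carrier (module_mat TYPE('a) n n)"
  then have X: "X \<in> carrier_mat n n" and Y: "Y \<in> carrier_mat n n"
    by (simp_all add: module_mat_simps)
  have "A * (X + Y) * B = (A * X + A * Y) * B"
    using A X Y by (simp add: mult_add_distrib_mat)
  also have "\<dots> = A * X * B + A * Y * B"
    using A B X Y by (intro add_mult_distrib_mat) auto
  finally show "A * (X \<oplus>\<^bsub>module_mat TYPE('a) n n\<^esub> Y) * B =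
      A * X * B \<oplus>\<^bsub>module_mat TYPE('a) p q\<^esub> A * Y * B"
    by (simp add: module_mat_simps)
next
  fix c :: 'a and X assume "c \<in> carrier class_ring \<and> X \<in> carrier (module_mat TYPE('a) n n)"
  then show "A * (c \<odot>\<^bsub>module_mat TYPE('a) n n\<^esub> X) * B =
      c \<odot>\<^bsub>module_mat TYPE('a) p q\<^esub> (A * X * B)"
    using A B by (simp add: module_mat_simps mult_smult_distrib[of _ p n] mult_smult_assoc_mat[of _ p n])
qed

lemma op_span_mono: "X \<subseteq> Y \<Longrightarrow> op_span d X \<subseteq> op_span d Y"
  unfolding op_span_def by (rule LinearCombinations.module.span_is_monotone[OF module_module_mat])

lemma op_span_superset: "X \<subseteq> carrier_mat d d \<Longrightarrow> X \<subseteq> op_span d X"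
  unfolding op_span_def
  by (rule LinearCombinations.module.in_own_span[OF module_module_mat]) (simp add: module_mat_simps)

lemma op_span_least:
  assumes "X \<subseteq> op_span d Y" and "Y \<subseteq> carrier_mat d d"
  shows "op_span d X \<subseteq> op_span d Y"
  using assms unfolding op_span_def
  by (intro LinearCombinations.module.span_is_subset[OF module_module_mat]
      LinearCombinations.module.span_is_submodule[OF module_module_mat])
    (simp_all add: module_mat_simps)

lemma scheduler_last_cases:
  assumes S: "S \<in> schedulers a" and b: "length b = length S" and nonempty: "a \<noteq> [] \<or> S \<noteq> []"
  obtains (measurement) S' b' \<gamma> where "S = S' @ [length a]" "b = b' @ [\<gamma>]" "S' \<in> schedulers a"
    | (letter) a' \<sigma> where "a = a' @ [\<sigma>]" "S \<in> schedulers a'"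
proof (cases "S \<noteq> [] \<and> last S = length a")
  case True
  then obtain S' where S': "S = S' @ [length a]" by (metis append_butlast_last_id)
  with b obtain b' \<gamma> where "b = b' @ [\<gamma>]" by (cases b rule: rev_exhaust) auto
  moreover have "S' \<in> schedulers a" using S S' by (auto simp: schedulers_def sorted_append)
  ultimately show ?thesis using S' measurement by blast
next
  case False
  have bounded: "s < length a" if s: "s \<in> set S" for s
  proof -
    have S_ne: "S \<noteq> []" using s by auto
    have "sorted (butlast S @ [last S])" and "s \<in> set (butlast S @ [last S])"
      using S s S_ne by (simp_all add: schedulers_def)
    then have "s \<le> last S" by (auto simp: sorted_append)
    moreover have "last S \<le> length a"
      using S last_in_set[OF S_ne] unfolding schedulers_def by (auto dest!: subsetD)
    ultimately show ?thesis using False S_ne by auto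
  qed
  have "a \<noteq> []"
  proof
    assume "a = []"
    with bounded have "S = []" by fastforce
    with \<open>a = []\<close> nonempty show False by simp
  qed
  then obtain a' \<sigma> where a: "a = a' @ [\<sigma>]" by (cases a rule: rev_exhaust) auto
  have "S \<in> schedulers a'" using S bounded by (force simp: schedulers_def a)
  with a letter show ?thesis by blast
qed

lemma op_span_sandwich_image:
  assumes A: "A \<in> carrier_mat d d" and X: "X \<subseteq> carrier_mat d d"
  shows "sandwich A ` op_span d X \<subseteq> op_span d (sandwich A ` X)"
proof -
  interpret mod_hom class_ring "module_mat TYPE(complex) d d" "module_mat TYPE(complex) d d"
    "\<lambda>x. A * x * mat_adjoint A"
    by (rule mod_hom_mult_both_mat[OF A mat_adjoint_carrier_mat[OF A]])
  show ?thesis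
    unfolding op_span_def sandwich_def
    by (rule image_span_subset) (use X in \<open>simp add: module_mat_simps\<close>)
qed

locale qmm_operators =
  fixes d :: nat and U :: "'s \<Rightarrow> complex mat" and M :: "'g \<Rightarrow> complex mat" and \<rho> :: "complex mat"
  assumes U_carrier: "U \<sigma> \<in> carrier_mat d d"
    and M_carrier: "M \<gamma> \<in> carrier_mat d d"
    and \<rho>_carrier: "\<rho> \<in> carrier_mat d d"
begin

abbreviation D :: "nat \<Rightarrow> nat \<Rightarrow> complex mat set" where
  "D l n \<equiv> D_set d U M l \<rho> n"

lemma U_word_carrier: "U_word d U a \<in> carrier_mat d d"
  by (induction a) (auto intro: mult_carrier_mat U_carrier)

lemma U_word_snoc: "U_word d U (a @ [\<sigma>]) = U \<sigma> * U_word d U a"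
proof (induction a)
  case Nil
  show ?case using U_carrier[of \<sigma>] by simp
next
  case (Cons \<tau> a)
  then show ?case
    using U_carrier[of \<sigma>] U_carrier[of \<tau>] U_word_carrier[of a]
    by (simp add: assoc_mult_mat[of _ d d _ d _ d] mult_carrier_mat[of _ d d _ d])
qed

lemma V_aux_carrier: "length b = length S \<Longrightarrow> V_aux d U M a p S b \<in> carrier_mat d d"
proof (induction S arbitrary: p b)
  case (Cons s S)
  then show ?case
    by (cases b) (auto intro!: mult_carrier_mat[of _ d d _ d] M_carrier U_word_carrier)
qed (simp add: U_word_carrier)

lemma V_op_carrier: "length b = length S \<Longrightarrow> V_op d U M a S b \<in> carrier_mat d d"
  unfolding V_op_def by (rule V_aux_carrier)

lemma V_aux_append_letter:
  "length b = length S \<Longrightarrow> \<forall>s\<in>set S. s \<le> length a \<Longrightarrow> p \<le> length a \<Longrightarrow>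
    V_aux d U M (a @ [\<sigma>]) p S b = U \<sigma> * V_aux d U M a p S b"
proof (induction S arbitrary: p b)
  case Nil
  then show ?case by (simp add: U_word_snoc)
next
  case (Cons s S)
  then obtain \<gamma> b' where b: "b = \<gamma> # b'" and b': "length b' = length S" by (cases b) auto
  have s: "s \<le> length a" using Cons.prems by simp
  let ?W = "U_word d U (take (s - p) (drop p a))"
  have "V_aux d U M (a @ [\<sigma>]) p (s # S) b = U \<sigma> * V_aux d U M a s S b' * M \<gamma> * ?W"
    using Cons.IH[OF b'] Cons.prems s by (simp add: b)
  also have "\<dots> = U \<sigma> * (V_aux d U M a s S b' * M \<gamma> * ?W)"
    using U_carrier[of \<sigma>] V_aux_carrier[OF b'] M_carrier[of \<gamma>] U_word_carrier
    by (simp add: assoc_mult_mat[of _ d d _ d _ d] mult_carrier_mat[of _ d d _ d])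
  finally show ?case by (simp add: b)
qed

lemma V_aux_append_measurement:
  "length b = length S \<Longrightarrow>
    V_aux d U M a p (S @ [length a]) (b @ [\<gamma>]) = M \<gamma> * V_aux d U M a p S b"
proof (induction S arbitrary: p b)
  case Nil
  then show ?case using M_carrier[of \<gamma>] U_word_carrier by simp
next
  case (Cons s S)
  then obtain \<gamma>' b' where b: "b = \<gamma>' # b'" and b': "length b' = length S" by (cases b) auto
  let ?W = "U_word d U (take (s - p) (drop p a))"
  have "V_aux d U M a p ((s # S) @ [length a]) (b @ [\<gamma>]) = M \<gamma> * V_aux d U M a s S b' * M \<gamma>' * ?W"
    using Cons.IH[OF b'] by (simp add: b)
  also have "\<dots> = M \<gamma> * (V_aux d U M a s S b' * M \<gamma>' * ?W)"
    using M_carrier[of \<gamma>] V_aux_carrier[OF b'] M_carrier[of \<gamma>'] U_word_carrier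
    by (simp add: assoc_mult_mat[of _ d d _ d _ d] mult_carrier_mat[of _ d d _ d])
  finally show ?case by (simp add: b)
qed

lemma V_op_append_letter:
  "S \<in> schedulers a \<Longrightarrow> length b = length S \<Longrightarrow>
    V_op d U M (a @ [\<sigma>]) S b = U \<sigma> * V_op d U M a S b"
  unfolding V_op_def schedulers_def by (auto intro!: V_aux_append_letter)

lemma V_op_append_measurement:
  "length b = length S \<Longrightarrow> V_op d U M a (S @ [length a]) (b @ [\<gamma>]) = M \<gamma> * V_op d U M a S b"
  unfolding V_op_def by (rule V_aux_append_measurement)

lemma mem_D_iff:
  "x \<in> D l n \<longleftrightarrow> (\<exists>a S b. x = sandwich (V_op d U M a S b) \<rho> \<and> S \<in> schedulers a \<and>
     length b = length S \<and> length a + length S \<le> n \<and> length S \<le> l)"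
  unfolding D_set_def sandwich_def by blast

lemma D_carrier: "D l n \<subseteq> carrier_mat d d"
  by (auto simp: mem_D_iff intro!: sandwich_carrier_mat V_op_carrier \<rho>_carrier)

lemma D_mono: "D l n \<subseteq> D l (Suc n)"
  by (fastforce simp: mem_D_iff)

lemma sandwich_U_mem_D_Suc:
  assumes "y \<in> D l n"
  shows "sandwich (U \<sigma>) y \<in> D l (Suc n)"
proof -
  from assms obtain a S b where y: "y = sandwich (V_op d U M a S b) \<rho>"
    and S: "S \<in> schedulers a" and b: "length b = length S"
    and size: "length a + length S \<le> n" and l: "length S \<le> l"
    by (auto simp: mem_D_iff)
  have "sandwich (U \<sigma>) y = sandwich (V_op d U M (a @ [\<sigma>]) S b) \<rho>"
    using S b U_carrier V_op_carrier[OF b] \<rho>_carrier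
    by (simp add: y V_op_append_letter sandwich_mult[of _ d])
  moreover have "S \<in> schedulers (a @ [\<sigma>])" using S by (auto simp: schedulers_def)
  ultimately show ?thesis
    unfolding mem_D_iff using b size l
    by (intro exI[of _ "a @ [\<sigma>]"] exI[of _ S] exI[of _ b]) simp
qed

lemma sandwich_M_mem_D_Suc:
  assumes "y \<in> D (l - 1) n" and "0 < l"
  shows "sandwich (M \<gamma>) y \<in> D l (Suc n)"
proof -
  from assms obtain a S b where y: "y = sandwich (V_op d U M a S b) \<rho>"
    and S: "S \<in> schedulers a" and b: "length b = length S"
    and size: "length a + length S \<le> n" and l: "length S < l"
    by (auto simp: mem_D_iff)
  have "sandwich (M \<gamma>) y = sandwich (V_op d U M a (S @ [length a]) (b @ [\<gamma>])) \<rho>"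
    using b M_carrier V_op_carrier[OF b] \<rho>_carrier
    by (simp add: y V_op_append_measurement sandwich_mult[of _ d])
  moreover have "S @ [length a] \<in> schedulers a" using S by (auto simp: schedulers_def sorted_append)
  ultimately show ?thesis
    unfolding mem_D_iff using b size l
    by (intro exI[of _ a] exI[of _ "S @ [length a]"] exI[of _ "b @ [\<gamma>]"]) simp
qed

definition D_step :: "nat \<Rightarrow> complex mat set \<Rightarrow> complex mat set \<Rightarrow> complex mat set" where
  "D_step l X Y = X \<union> (\<Union>\<sigma>. sandwich (U \<sigma>) ` X) \<union> (if 0 < l then \<Union>\<gamma>. sandwich (M \<gamma>) ` Y else {})"

lemma D_Suc_subset: "D l (Suc n) \<subseteq> D_step l (D l n) (D (l - 1) n)"
proof
  fix x assume "x \<in> D l (Suc n)"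
  then obtain a S b where x: "x = sandwich (V_op d U M a S b) \<rho>"
    and S: "S \<in> schedulers a" and b: "length b = length S"
    and size: "length a + length S \<le> Suc n" and l: "length S \<le> l"
    by (auto simp: mem_D_iff)
  show "x \<in> D_step l (D l n) (D (l - 1) n)"
  proof (cases "length a + length S \<le> n")
    case True
    then have "x \<in> D l n" using x S b l by (auto simp: mem_D_iff)
    then show ?thesis by (simp add: D_step_def)
  next
    case False
    then have "a \<noteq> [] \<or> S \<noteq> []" by auto
    with S b show ?thesis
    proof (cases rule: scheduler_last_cases)
      case (measurement S' b' \<gamma>)
      then have b': "length b' = length S'" using b by simp
      have "sandwich (V_op d U M a S' b') \<rho> \<in> D (l - 1) n"
        unfolding mem_D_iff using measurement b' size l
        by (intro exI[of _ a] exI[of _ S'] exI[of _ b']) auto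
      moreover have "x = sandwich (M \<gamma>) (sandwich (V_op d U M a S' b') \<rho>)"
        using x measurement b' M_carrier V_op_carrier[OF b'] \<rho>_carrier
        by (simp add: V_op_append_measurement sandwich_mult[of _ d])
      moreover have "0 < l" using l measurement by simp
      ultimately show ?thesis by (auto simp: D_step_def)
    next
      case (letter a' \<sigma>)
      have "sandwich (V_op d U M a' S b) \<rho> \<in> D l n"
        unfolding mem_D_iff using letter b size False l by auto
      moreover have "x = sandwich (U \<sigma>) (sandwich (V_op d U M a' S b) \<rho>)"
        using x letter b U_carrier V_op_carrier[OF b] \<rho>_carrier
        by (simp add: V_op_append_letter sandwich_mult[of _ d])
      ultimately show ?thesis by (auto simp: D_step_def)
    qed
  qed
qed

lemma D_Suc: "D l (Suc n) = D_step l (D l n) (D (l - 1) n)"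
proof
  show "D_step l (D l n) (D (l - 1) n) \<subseteq> D l (Suc n)"
    by (auto simp: D_step_def intro: D_mono[THEN subsetD] sandwich_U_mem_D_Suc sandwich_M_mem_D_Suc)
qed (rule D_Suc_subset)

lemma D_step_carrier:
  "X \<subseteq> carrier_mat d d \<Longrightarrow> Y \<subseteq> carrier_mat d d \<Longrightarrow> D_step l X Y \<subseteq> carrier_mat d d"
  by (auto simp: D_step_def intro!: sandwich_carrier_mat U_carrier M_carrier)

lemma D_step_mono: "X \<subseteq> X' \<Longrightarrow> Y \<subseteq> Y' \<Longrightarrow> D_step l X Y \<subseteq> D_step l X' Y'"
  unfolding D_step_def by (intro Un_mono UN_mono image_mono order_refl) auto

lemma op_span_D_step:
  assumes X: "X \<subseteq> carrier_mat d d" and Y: "Y \<subseteq> carrier_mat d d"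
  shows "op_span d (D_step l (op_span d X) (op_span d Y)) = op_span d (D_step l X Y)"
proof
  show "op_span d (D_step l X Y) \<subseteq> op_span d (D_step l (op_span d X) (op_span d Y))"
    by (intro op_span_mono D_step_mono op_span_superset X Y)
  have "op_span d X \<subseteq> op_span d (D_step l X Y)"
    by (rule op_span_mono) (auto simp: D_step_def)
  moreover have "sandwich (U \<sigma>) ` op_span d X \<subseteq> op_span d (D_step l X Y)" for \<sigma>
  proof -
    have "sandwich (U \<sigma>) ` X \<subseteq> D_step l X Y" unfolding D_step_def by blast
    then show ?thesis using op_span_sandwich_image[OF U_carrier X] op_span_mono by blast
  qed
  moreover have "sandwich (M \<gamma>) ` op_span d Y \<subseteq> op_span d (D_step l X Y)" if "0 < l" for \<gamma>
  proof -
    have "sandwich (M \<gamma>) ` Y \<subseteq> D_step l X Y" unfolding D_step_def using that by auto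
    then show ?thesis using op_span_sandwich_image[OF M_carrier Y] op_span_mono by blast
  qed
  ultimately have "D_step l (op_span d X) (op_span d Y) \<subseteq> op_span d (D_step l X Y)"
    unfolding D_step_def[of l "op_span d X"] by (simp add: UN_least)
  then show "op_span d (D_step l (op_span d X) (op_span d Y)) \<subseteq> op_span d (D_step l X Y)"
    by (rule op_span_least) (rule D_step_carrier[OF X Y])
qed

lemma op_span_D_Suc:
  "op_span d (D l (Suc n)) = op_span d (D_step l (op_span d (D l n)) (op_span d (D (l - 1) n)))"
  by (simp add: D_Suc op_span_D_step D_carrier)

lemma op_span_D_stable:
  assumes stable: "\<And>l. l \<le> k \<Longrightarrow> op_span d (D l (Suc m)) = op_span d (D l m)"
  shows "l \<le> k \<Longrightarrow> op_span d (D l (m + \<delta>)) = op_span d (D l m)"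
proof (induction \<delta> arbitrary: l)
  case (Suc \<delta>)
  have "op_span d (D l (m + Suc \<delta>)) =
      op_span d (D_step l (op_span d (D l (m + \<delta>))) (op_span d (D (l - 1) (m + \<delta>))))"
    by (simp add: op_span_D_Suc)
  also have "\<dots> = op_span d (D_step l (op_span d (D l m)) (op_span d (D (l - 1) m)))"
    using Suc by simp
  also have "\<dots> = op_span d (D l (Suc m))"
    by (simp add: op_span_D_Suc)
  also have "\<dots> = op_span d (D l m)"
    using stable Suc.prems .
  finally show ?case .
qed simp

end

theorem lemma1:
  fixes d :: nat
    and U :: "'s::finite \<Rightarrow> complex mat"
    and M :: "'g::finite \<Rightarrow> complex mat"
    and \<rho> :: "complex mat"
    and m k :: nat
  assumes "is_QMM d U M"
    and "\<rho> \<in> carrier_mat d d" and "mat_adjoint \<rho> = \<rho>"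
    and "\<forall>l\<le>k. op_span d (D_set d U M l \<rho> m) = op_span d (D_set d U M l \<rho> (m + 1))"
  shows "\<forall>l\<le>k. \<forall>\<delta>::nat. op_span d (D_set d U M l \<rho> m) = op_span d (D_set d U M l \<rho> (m + \<delta>))"
proof -
  interpret qmm_operators d U M \<rho>
    using assms(1,2) by unfold_locales (auto simp: is_QMM_def)
  have "op_span d (D l (Suc m)) = op_span d (D l m)" if "l \<le> k" for l
    using assms(4) that by simp
  then show ?thesis
    using op_span_D_stable by metis
qed

end
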